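(* Let $f\in\mathscr{S}^*_\wp$ and $0\le\alpha<1$. Let $r_\alpha\in(0,1)$ be the smallest positive root of $(1-r)(1-re^r)(1-re^r-\alpha)-re^r=0$. Then $\operatorname{Re}\left(1+\frac{zf''(z)}{f'(z)}\right)>\alpha$ for $|z|<r_\alpha$. In particular ($\alpha=0$), $f$ is convex in $|z|<r_0\approx0.256707$.
   Context: $\mathbb{D}$ is the unit disk; $\mathcal{A}$ is the class of analytic $f$ on $\mathbb{D}$ with $f(0)=0,f'(0)=1$. $f\prec g$ means $f=g\circ\omega$ for analytic $\omega:\mathbb{D}\to\mathbb{D}$, $\omega(0)=0$. $\wp(z)=1+ze^z$, $\mathscr{S}^*_\wp=\{f\in\mathcal{A}:zf'(z)/f(z)\prec\wp(z)\}$. *)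

theory Defs
  imports "HOL-Complex_Analysis.Complex_Analysis"
begin

definition wp :: "complex \<Rightarrow> complex" where
  "wp z = 1 + z * exp z"

definition subordinate :: "(complex \<Rightarrow> complex) \<Rightarrow> (complex \<Rightarrow> complex) \<Rightarrow> bool" where
  "subordinate p g \<longleftrightarrow>
     (\<exists>\<omega>. \<omega> holomorphic_on ball 0 1 \<and> \<omega> 0 = 0 \<and> \<omega> ` ball 0 1 \<subseteq> ball 0 1 \<and>
          (\<forall>z\<in>ball 0 1. p z = g (\<omega> z)))"

definition classA :: "(complex \<Rightarrow> complex) \<Rightarrow> bool" where
  "classA f \<longleftrightarrow> f holomorphic_on ball 0 1 \<and> f 0 = 0 \<and> deriv f 0 = 1"

text \<open>S*_wp: z f'(z)/f(z) (analytic on the disk, value 1 at 0 by continuity;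
  f has no zeros in the punctured disk) is subordinate to wp.\<close>
definition Swp :: "(complex \<Rightarrow> complex) set" where
  "Swp = {f. classA f \<and> (\<forall>z\<in>ball 0 1 - {0}. f z \<noteq> 0) \<and>
     subordinate (\<lambda>z. if z = 0 then 1 else z * deriv f z / f z) wp}"

definition g_alpha :: "real \<Rightarrow> real \<Rightarrow> real" where
  "g_alpha \<alpha> r = (1 - r) * (1 - r * exp r) * (1 - r * exp r - \<alpha>) - r * exp r"

end

theory Submission
  imports Defs
begin

text \<open>Write \<open>z f'(z) / f(z) = p(z)\<close> with \<open>p = \<wp> \<circ> \<omega>\<close> for a Schwarz function \<open>\<omega>\<close>.
  Logarithmic differentiation gives \<open>1 + z f''/f' = p + z p'/p\<close>. For \<open>|z| = r\<close> the
  Schwarz lemma gives \<open>|\<omega>(z)| \<le> r\<close>, hence \<open>Re p \<ge> 1 - r e\<^sup>r\<close>, and the Schwarz--Pick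
  lemma gives \<open>|\<omega>'(z)| \<le> 1/(1 - r\<^sup>2)\<close>, hence \<open>|z p'(z)| \<le> r e\<^sup>r/(1 - r)\<close>. So
  \<open>Re (1 + z f''/f') \<ge> 1 - r e\<^sup>r - r e\<^sup>r / ((1 - r)(1 - r e\<^sup>r))\<close>, which exceeds \<open>\<alpha>\<close>
  exactly when \<open>g_alpha \<alpha> r > 0\<close>; and \<open>g_alpha \<alpha>\<close> is positive on \<open>[0, r\<^sub>\<alpha>)\<close> because it
  starts at \<open>1 - \<alpha>\<close> and has no zero there.\<close>

lemma Moebius_function_has_field_derivative:
  assumes "1 - cnj w * z \<noteq> 0"
  shows "(Moebius_function 0 w has_field_derivative (1 - cnj w * w) / (1 - cnj w * z)\<^sup>2) (at z)"
  unfolding Moebius_function_simple[abs_def] using assms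
  by (auto intro!: derivative_eq_intros simp: field_simps power2_eq_square)

lemma one_minus_cnj_mult_self: "1 - cnj a * a = of_real (1 - (norm a)\<^sup>2)"
  by (simp add: complex_norm_square[symmetric] mult.commute)

lemma Schwarz_Pick_deriv:
  assumes holw: "w holomorphic_on ball 0 1" and w_ball: "w ` ball 0 1 \<subseteq> ball 0 1"
    and a: "norm a < 1"
  shows "norm (deriv w a) \<le> (1 - (norm (w a))\<^sup>2) / (1 - (norm a)\<^sup>2)"
proof -
  define b where "b = w a"
  have b: "norm b < 1" using w_ball a by (auto simp: b_def image_subset_iff)
  define h where "h = Moebius_function 0 b \<circ> w \<circ> Moebius_function 0 (-a)"
  have Moebius_ball: "Moebius_function 0 c ` ball 0 1 \<subseteq> ball 0 1" if "norm c < 1" for c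
    using Moebius_function_norm_lt_1[OF that] by auto
  have "Moebius_function 0 b \<circ> w holomorphic_on ball 0 1"
    using holomorphic_on_compose_gen[OF holw Moebius_function_holomorphic w_ball] b .
  then have holh: "h holomorphic_on ball 0 1"
    unfolding h_def using a Moebius_ball[of "-a"]
    by (auto intro!: holomorphic_on_compose_gen[of _ _ _ "ball 0 1"] Moebius_function_holomorphic)
  have h0: "h 0 = 0"
    by (simp add: h_def b_def Moebius_function_def)
  have h_ball: "norm (h z) < 1" if "norm z < 1" for z
    using Moebius_ball[of "-a"] Moebius_ball[OF b] w_ball a that by (auto simp: h_def image_subset_iff)
  have b_pos: "0 < 1 - (norm b)\<^sup>2" and a_pos: "0 < 1 - (norm a)\<^sup>2"
    using a b by (simp_all add: abs_square_less_1)
  then have "1 - cnj b * b \<noteq> 0"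
    unfolding one_minus_cnj_mult_self of_real_eq_0_iff by linarith
  then have dMb: "(Moebius_function 0 b has_field_derivative (1 - cnj b * b) / (1 - cnj b * b)\<^sup>2)
      (at ((w \<circ> Moebius_function 0 (-a)) 0))"
    using Moebius_function_has_field_derivative[of b b] by (simp add: Moebius_function_def b_def)
  have "w field_differentiable at a"
    using holw a by (simp add: holomorphic_on_imp_differentiable_at)
  then have dw: "(w has_field_derivative deriv w a) (at (Moebius_function 0 (-a) 0))"
    by (simp add: Moebius_function_def DERIV_deriv_iff_field_differentiable)
  have dMa: "(Moebius_function 0 (-a) has_field_derivative 1 - cnj a * a) (at 0)"
    using Moebius_function_has_field_derivative[of "-a" 0] by simp
  have "(h has_field_derivative
          (1 - cnj b * b) / (1 - cnj b * b)\<^sup>2 * (deriv w a * (1 - cnj a * a))) (at 0)"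
    using DERIV_chain[OF dMb DERIV_chain[OF dw dMa]] by (simp add: h_def o_assoc)
  then have "deriv h 0 = (1 - cnj b * b) / (1 - cnj b * b)\<^sup>2 * (deriv w a * (1 - cnj a * a))"
    by (rule DERIV_imp_deriv)
  also have "\<dots> = of_real ((1 - (norm a)\<^sup>2) / (1 - (norm b)\<^sup>2)) * deriv w a"
    unfolding one_minus_cnj_mult_self using b_pos by (simp add: power2_eq_square)
  finally have "norm (deriv h 0) = (1 - (norm a)\<^sup>2) / (1 - (norm b)\<^sup>2) * norm (deriv w a)"
    by (simp only: norm_mult norm_of_real abs_of_pos[OF divide_pos_pos[OF a_pos b_pos]])
  moreover have "norm (deriv h 0) \<le> 1"
    using Schwarz_Lemma(2)[OF holh h0 h_ball, of 0] by simp
  ultimately show ?thesis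
    using a_pos b_pos by (simp add: norm_mult field_simps b_def)
qed

lemma Schwarz_function_bounds:
  assumes "\<omega> holomorphic_on ball 0 1" "\<omega> 0 = 0" "\<omega> ` ball 0 1 \<subseteq> ball 0 1"
    and "norm z = r" "r < 1"
  shows "norm (\<omega> z) \<le> r" and "norm (deriv \<omega> z) \<le> 1 / (1 - r\<^sup>2)"
proof -
  show "norm (\<omega> z) \<le> r"
    using Schwarz_Lemma(1)[OF assms(1,2), of z] assms(3-5) by (auto simp: image_subset_iff)
  have "0 < 1 - r\<^sup>2"
    using assms(4,5) norm_ge_zero[of z] by (simp add: abs_square_less_1)
  then show "norm (deriv \<omega> z) \<le> 1 / (1 - r\<^sup>2)"
    using Schwarz_Pick_deriv[OF assms(1,3), of z] assms(4,5)
    by (auto elim!: order_trans intro!: divide_right_mono)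
qed

lemma wp_has_field_derivative: "(wp has_field_derivative (1 + w) * exp w) (at w)"
  unfolding wp_def[abs_def] by (auto intro!: derivative_eq_intros simp: algebra_simps)

lemma norm_exp_le:
  fixes w :: complex
  assumes "norm w \<le> r"
  shows "norm (exp w) \<le> exp r"
  using norm_exp[of w] assms by (meson exp_le_cancel_iff order_trans)

lemma norm_mult_exp_le:
  fixes w :: complex
  assumes "norm w \<le> r"
  shows "norm (w * exp w) \<le> r * exp r"
  unfolding norm_mult using assms norm_exp_le[OF assms] order_trans[OF norm_ge_zero assms]
  by (intro mult_mono) auto

lemma norm_deriv_wp_le:
  fixes w :: complex
  assumes "norm w \<le> r"
  shows "norm ((1 + w) * exp w) \<le> (1 + r) * exp r"
proof -
  have "norm (1 + w) \<le> 1 + r"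
    using norm_triangle_ineq[of 1 w] assms by simp
  then show ?thesis
    unfolding norm_mult using norm_exp_le[OF assms] order_trans[OF norm_ge_zero assms]
    by (intro mult_mono) auto
qed

lemma Re_add_divide_ge:
  fixes p x :: complex
  assumes "0 < m" "m \<le> Re p" "norm x \<le> c"
  shows "m - c / m \<le> Re (p + x / p)"
proof -
  have "m \<le> norm p"
    using assms(2) complex_Re_le_cmod order_trans by blast
  then have "norm (x / p) \<le> c / m"
    using assms order_trans[OF norm_ge_zero assms(3)] by (auto simp: norm_divide intro!: frac_le)
  then show ?thesis
    using assms(2) abs_Re_le_cmod[of "x / p"] by simp
qed

lemma one_plus_z_deriv2_div_deriv_eq:
  assumes holf: "f holomorphic_on S" and S: "open S" "z \<in> S"
    and nz: "z \<noteq> 0" "f z \<noteq> 0" "deriv f z \<noteq> 0"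
    and dq: "((\<lambda>u. u * deriv f u / f u) has_field_derivative q) (at z)"
  defines "p \<equiv> z * deriv f z / f z"
  shows "1 + z * deriv (deriv f) z / deriv f z = p + z * q / p"
proof -
  have "(f has_field_derivative deriv f z) (at z)"
    using holomorphic_derivI[OF holf S] .
  moreover have "(deriv f has_field_derivative deriv (deriv f) z) (at z)"
    using holomorphic_derivI[OF holomorphic_deriv[OF holf S(1)] S] .
  ultimately have "((\<lambda>u. u * deriv f u / f u) has_field_derivative
      ((deriv f z + z * deriv (deriv f) z) * f z - z * deriv f z * deriv f z) / (f z * f z)) (at z)"
    using nz by (auto intro!: derivative_eq_intros)
  then have "q = ((deriv f z + z * deriv (deriv f) z) * f z - z * deriv f z * deriv f z) / (f z * f z)"
    using DERIV_unique[OF dq] by blast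
  then show ?thesis
    using nz by (simp add: p_def field_simps)
qed

lemma SwpE:
  assumes "f \<in> Swp"
  obtains \<omega> where "\<omega> holomorphic_on ball 0 1" "\<omega> 0 = 0" "\<omega> ` ball 0 1 \<subseteq> ball 0 1"
    and "\<And>u. u \<in> ball 0 1 - {0} \<Longrightarrow> u * deriv f u / f u = wp (\<omega> u)"
proof -
  from assms obtain \<omega> where "\<omega> holomorphic_on ball 0 1" "\<omega> 0 = 0" "\<omega> ` ball 0 1 \<subseteq> ball 0 1"
    and subord: "\<forall>u\<in>ball 0 1. (if u = 0 then 1 else u * deriv f u / f u) = wp (\<omega> u)"
    by (auto simp: Swp_def subordinate_def)
  moreover have "u * deriv f u / f u = wp (\<omega> u)" if "u \<in> ball 0 1 - {0}" for u
    using bspec[OF subord, of u] that by simp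
  ultimately show ?thesis
    using that by blast
qed

lemma Swp_Re_one_plus_z_deriv2_div_deriv_ge:
  assumes f: "f \<in> Swp" and r: "norm z = r" "0 < r" "r < 1" and K: "r * exp r < 1"
  shows "1 - r * exp r - r * exp r / ((1 - r) * (1 - r * exp r))
           \<le> Re (1 + z * deriv (deriv f) z / deriv f z)"
proof -
  from f obtain \<omega> where hol\<omega>: "\<omega> holomorphic_on ball 0 1" and "\<omega> 0 = 0"
    and \<omega>_ball: "\<omega> ` ball 0 1 \<subseteq> ball 0 1"
    and p_eq: "\<And>u. u \<in> ball 0 1 - {0} \<Longrightarrow> u * deriv f u / f u = wp (\<omega> u)"
    using SwpE[OF f] by blast
  from f have holf: "f holomorphic_on ball 0 1" and f_nz: "\<forall>u\<in>ball 0 1 - {0}. f u \<noteq> 0"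
    by (auto simp: Swp_def classA_def)
  have zb: "z \<in> ball 0 1" and "z \<noteq> 0"
    using r by auto
  define W where "W = \<omega> z"
  have W_le: "norm W \<le> r" and \<omega>'_le: "norm (deriv \<omega> z) \<le> 1 / (1 - r\<^sup>2)"
    using Schwarz_function_bounds[OF hol\<omega> \<open>\<omega> 0 = 0\<close> \<omega>_ball r(1,3)] by (simp_all add: W_def)
  have p_z: "z * deriv f z / f z = wp W"
    using p_eq zb \<open>z \<noteq> 0\<close> by (simp add: W_def)
  have Re_p: "1 - r * exp r \<le> Re (wp W)"
    using norm_mult_exp_le[OF W_le] abs_Re_le_cmod[of "W * exp W"] by (simp add: wp_def)
  then have "deriv f z \<noteq> 0"
    using K p_z by auto
  have "((\<lambda>u. wp (\<omega> u)) has_field_derivative (1 + W) * exp W * deriv \<omega> z) (at z)"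
    using DERIV_chain2[OF wp_has_field_derivative holomorphic_derivI[OF hol\<omega> open_ball zb]]
    by (simp add: W_def)
  then have dp: "((\<lambda>u. u * deriv f u / f u) has_field_derivative (1 + W) * exp W * deriv \<omega> z) (at z)"
    by (rule has_field_derivative_transform_within_open[of _ _ _ "ball 0 1 - {0}"])
      (use p_eq zb \<open>z \<noteq> 0\<close> in \<open>auto simp: open_Diff\<close>)
  have "norm (z * ((1 + W) * exp W * deriv \<omega> z)) = r * norm ((1 + W) * exp W) * norm (deriv \<omega> z)"
    by (simp add: r(1) norm_mult)
  also have "\<dots> \<le> r * ((1 + r) * exp r) * (1 / (1 - r\<^sup>2))"
    using norm_deriv_wp_le[OF W_le] \<omega>'_le r(2) by (intro mult_mono mult_left_mono) auto
  also have "\<dots> = r * exp r / (1 - r)"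
    using r(2,3) mult_strict_mono[of r 1 r 1] by (simp add: power2_eq_square field_simps)
  finally have zp'_le: "norm (z * ((1 + W) * exp W * deriv \<omega> z)) \<le> r * exp r / (1 - r)" .
  have "f z \<noteq> 0"
    using f_nz zb \<open>z \<noteq> 0\<close> by auto
  note convexity_eq = one_plus_z_deriv2_div_deriv_eq[OF holf open_ball zb \<open>z \<noteq> 0\<close> this
      \<open>deriv f z \<noteq> 0\<close> dp]
  show ?thesis
    using Re_add_divide_ge[OF _ Re_p zp'_le] K unfolding convexity_eq p_z
    by (simp add: divide_divide_eq_left mult.commute)
qed

lemma g_alpha_pos_below_first_root:
  assumes "\<alpha> < 1" and no_root: "\<forall>s. 0 < s \<and> s < \<rho> \<longrightarrow> g_alpha \<alpha> s \<noteq> 0"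
    and "0 \<le> s" "s < \<rho>"
  shows "0 < g_alpha \<alpha> s"
proof (rule ccontr)
  assume "\<not> 0 < g_alpha \<alpha> s"
  moreover have "g_alpha \<alpha> 0 = 1 - \<alpha>"
    by (simp add: g_alpha_def)
  ultimately have "\<exists>x\<ge>0. x \<le> s \<and> g_alpha \<alpha> x = 0"
    using assms by (intro IVT2) (auto simp: g_alpha_def intro!: continuous_intros)
  then obtain x where "0 \<le> x" "x \<le> s" "g_alpha \<alpha> x = 0"
    by blast
  then show False
    using no_root assms \<open>g_alpha \<alpha> 0 = 1 - \<alpha>\<close> by (cases "x = 0") auto
qed

lemma mult_exp_lt_1_below_first_root:
  assumes "\<alpha> < 1" and "\<forall>s. 0 < s \<and> s < \<rho> \<longrightarrow> g_alpha \<alpha> s \<noteq> 0"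
    and "0 \<le> s" "s < \<rho>"
  shows "s * exp s < 1"
proof (rule ccontr)
  assume "\<not> s * exp s < 1"
  then have "\<exists>x\<ge>0. x \<le> s \<and> x * exp x = 1"
    using assms by (intro IVT) (auto intro!: continuous_intros)
  then obtain x where x: "0 \<le> x" "x \<le> s" "x * exp x = 1"
    by blast
  then have "g_alpha \<alpha> x = -1"
    by (simp add: g_alpha_def)
  moreover have "0 < g_alpha \<alpha> x"
    using g_alpha_pos_below_first_root[OF assms(1,2)] x assms(4) by simp
  ultimately show False
    by simp
qed

lemma g_alpha_pos_imp_less:
  assumes "r < 1" "r * exp r < 1" "0 < g_alpha \<alpha> r"
  shows "\<alpha> < 1 - r * exp r - r * exp r / ((1 - r) * (1 - r * exp r))"
proof -
  have "0 < (1 - r) * (1 - r * exp r)"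
    using assms by simp
  moreover have "r * exp r < (1 - r) * (1 - r * exp r) * (1 - r * exp r - \<alpha>)"
    using assms(3) by (simp add: g_alpha_def)
  ultimately have "r * exp r / ((1 - r) * (1 - r * exp r)) < 1 - r * exp r - \<alpha>"
    by (simp add: pos_divide_less_eq mult.commute)
  then show ?thesis
    by linarith
qed

theorem mainTheorem6:
  fixes f :: "complex \<Rightarrow> complex" and \<alpha> r\<^sub>\<alpha> :: real
  assumes "f \<in> Swp"
    and "0 \<le> \<alpha>" and "\<alpha> < 1"
    and "0 < r\<^sub>\<alpha>" and "r\<^sub>\<alpha> < 1"
    and "g_alpha \<alpha> r\<^sub>\<alpha> = 0"
    and "\<forall>s. 0 < s \<and> s < r\<^sub>\<alpha> \<longrightarrow> g_alpha \<alpha> s \<noteq> 0"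
  shows "\<forall>z. norm z < r\<^sub>\<alpha> \<longrightarrow> Re (1 + z * deriv (deriv f) z / deriv f z) > \<alpha>"
proof (intro allI impI)
  fix z :: complex
  assume z: "norm z < r\<^sub>\<alpha>"
  show "\<alpha> < Re (1 + z * deriv (deriv f) z / deriv f z)"
  proof (cases "z = 0")
    case True
    then show ?thesis
      using assms by simp
  next
    case False
    define r where "r = norm z"
    have r: "norm z = r" "0 < r" "r < 1" "r < r\<^sub>\<alpha>"
      using False z assms by (auto simp: r_def)
    have K: "r * exp r < 1"
      using mult_exp_lt_1_below_first_root[OF assms(3,7)] r by simp
    have "\<alpha> < 1 - r * exp r - r * exp r / ((1 - r) * (1 - r * exp r))"
      using g_alpha_pos_imp_less[OF r(3) K] g_alpha_pos_below_first_root[OF assms(3,7)] r by simp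
    also have "\<dots> \<le> Re (1 + z * deriv (deriv f) z / deriv f z)"
      using Swp_Re_one_plus_z_deriv2_div_deriv_ge[OF assms(1) r(1-3) K] .
    finally show ?thesis .
  qed
qed

end
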